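(* A topological partial action is free if and only if its enveloping action is free.
   Context: A topological partial action $\tau=(\{Y_t\}_{t\in H},\{\tau_t\}_{t\in H})$ of a topological group $H$ on a space $Y$: open $Y_t\subseteq Y$, homeomorphisms $\tau_t\colon Y_{t^{-1}}\to Y_t$, $Y_e=Y$, $\tau_e=\mathrm{id}$, $\tau_s(Y_{s^{-1}}\cap Y_t)=Y_s\cap Y_{st}$, $\tau_s\tau_t=\tau_{st}$ on $Y_{t^{-1}}\cap Y_{t^{-1}s^{-1}}$, with $\{(t,y):y\in Y_{t^{-1}}\}$ open and $(t,y)\mapsto\tau_t(y)$ continuous. It is free if for all $t\neq e$ the set $\{y\in Y_{t^{-1}}:\tau_t(y)=y\}$ is empty (for a global action, $Y_t=Y$ for all $t$). The enveloping action $\tau^e$ is (up to isomorphism) the global action of $H$ on a space $Y^e$ such that $Y$ is open in $Y^e$, $Y_t=Y\cap\tau^e_t(Y)$, $\tau_t=\tau^e_t$ on $Y_{t^{-1}}$, and $Y^e=\bigcup_t\tau^e_t(Y)$. *)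

theory Defs
  imports "HOL-Analysis.Analysis" "HOL-Algebra.Group"
begin

definition topological_group :: "('a, 'm) monoid_scheme \<Rightarrow> 'a topology \<Rightarrow> bool" where
  "topological_group G TG \<longleftrightarrow> group G \<and> topspace TG = carrier G
     \<and> continuous_map (prod_topology TG TG) TG (\<lambda>(x, y). x \<otimes>\<^bsub>G\<^esub> y)
     \<and> continuous_map TG TG (\<lambda>x. inv\<^bsub>G\<^esub> x)"

text \<open>Topological partial action of (G, TG) on the space TY, given by the
  domains D t (= Y_t) and maps th t (= tau_t : Y_{t^-1} -> Y_t).\<close>
definition topological_partial_action ::
  "('a, 'm) monoid_scheme \<Rightarrow> 'a topology \<Rightarrow> 'b topology \<Rightarrow> ('a \<Rightarrow> 'b set) \<Rightarrow> ('a \<Rightarrow> 'b \<Rightarrow> 'b) \<Rightarrow> bool" where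
  "topological_partial_action G TG TY D th \<longleftrightarrow>
     topological_group G TG
     \<and> (\<forall>t\<in>carrier G. openin TY (D t))
     \<and> (\<forall>t\<in>carrier G. homeomorphic_map (subtopology TY (D (inv\<^bsub>G\<^esub> t))) (subtopology TY (D t)) (th t))
     \<and> D \<one>\<^bsub>G\<^esub> = topspace TY
     \<and> (\<forall>y\<in>topspace TY. th \<one>\<^bsub>G\<^esub> y = y)
     \<and> (\<forall>s\<in>carrier G. \<forall>t\<in>carrier G.
          th s ` (D (inv\<^bsub>G\<^esub> s) \<inter> D t) = D s \<inter> D (s \<otimes>\<^bsub>G\<^esub> t))
     \<and> (\<forall>s\<in>carrier G. \<forall>t\<in>carrier G.
          \<forall>y \<in> D (inv\<^bsub>G\<^esub> t) \<inter> D (inv\<^bsub>G\<^esub> t \<otimes>\<^bsub>G\<^esub> inv\<^bsub>G\<^esub> s).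
             th s (th t y) = th (s \<otimes>\<^bsub>G\<^esub> t) y)
     \<and> openin (prod_topology TG TY) {(t, y). t \<in> carrier G \<and> y \<in> D (inv\<^bsub>G\<^esub> t)}
     \<and> continuous_map
         (subtopology (prod_topology TG TY) {(t, y). t \<in> carrier G \<and> y \<in> D (inv\<^bsub>G\<^esub> t)})
         TY (\<lambda>(t, y). th t y)"

definition topological_global_action ::
  "('a, 'm) monoid_scheme \<Rightarrow> 'a topology \<Rightarrow> 'c topology \<Rightarrow> ('a \<Rightarrow> 'c \<Rightarrow> 'c) \<Rightarrow> bool" where
  "topological_global_action G TG TZ sg \<longleftrightarrow>
     topological_partial_action G TG TZ (\<lambda>_. topspace TZ) sg"

definition free_partial_action ::
  "('a, 'm) monoid_scheme \<Rightarrow> ('a \<Rightarrow> 'b set) \<Rightarrow> ('a \<Rightarrow> 'b \<Rightarrow> 'b) \<Rightarrow> bool" where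
  "free_partial_action G D th \<longleftrightarrow>
     (\<forall>t\<in>carrier G. t \<noteq> \<one>\<^bsub>G\<^esub> \<longrightarrow> {y \<in> D (inv\<^bsub>G\<^esub> t). th t y = y} = {})"

definition free_global_action ::
  "('a, 'm) monoid_scheme \<Rightarrow> 'c topology \<Rightarrow> ('a \<Rightarrow> 'c \<Rightarrow> 'c) \<Rightarrow> bool" where
  "free_global_action G TZ sg \<longleftrightarrow> free_partial_action G (\<lambda>_. topspace TZ) sg"

text \<open>(TZ, sg) together with the open embedding i : Y -> Z is an enveloping action
  of the partial action (D, th) on TY (Y identified with its image i(Y)).\<close>
definition enveloping_action ::
  "('a, 'm) monoid_scheme \<Rightarrow> 'a topology \<Rightarrow> 'b topology \<Rightarrow> ('a \<Rightarrow> 'b set) \<Rightarrow> ('a \<Rightarrow> 'b \<Rightarrow> 'b)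
   \<Rightarrow> 'c topology \<Rightarrow> ('a \<Rightarrow> 'c \<Rightarrow> 'c) \<Rightarrow> ('b \<Rightarrow> 'c) \<Rightarrow> bool" where
  "enveloping_action G TG TY D th TZ sg i \<longleftrightarrow>
     topological_global_action G TG TZ sg
     \<and> embedding_map TY TZ i
     \<and> openin TZ (i ` topspace TY)
     \<and> (\<forall>t\<in>carrier G. i ` D t = i ` topspace TY \<inter> sg t ` (i ` topspace TY))
     \<and> (\<forall>t\<in>carrier G. \<forall>y\<in>D (inv\<^bsub>G\<^esub> t). i (th t y) = sg t (i y))
     \<and> topspace TZ = (\<Union>t\<in>carrier G. sg t ` (i ` topspace TY))"

end

theory Submission
  imports Defs
begin

text \<open>A fixed point of the enveloping action can be moved by the group into the
  open copy of Y, conjugating its stabiliser. There it is a fixed point of the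
  partial action: if \<open>\<sigma>\<^sub>u\<close> fixes \<open>y\<close>, then \<open>y = \<sigma>\<^sub>u\<^sub>\<inverse> y\<close> lies in
  \<open>Y \<inter> \<sigma>\<^sub>u\<^sub>\<inverse> Y = Y\<^sub>u\<^sub>\<inverse>\<close>, where \<open>\<tau>\<^sub>u\<close> agrees with \<open>\<sigma>\<^sub>u\<close>. Conversely a fixed point of
  \<open>\<tau>\<^sub>t\<close> is one of \<open>\<sigma>\<^sub>t\<close> directly.\<close>

lemma (in group) inv_conj_eq_one_iff:
  assumes "s \<in> carrier G" and "t \<in> carrier G"
  shows "inv s \<otimes> t \<otimes> s = \<one> \<longleftrightarrow> t = \<one>"
proof
  assume "inv s \<otimes> t \<otimes> s = \<one>"
  moreover have "t = s \<otimes> (inv s \<otimes> t \<otimes> s) \<otimes> inv s"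
    using assms by (simp add: m_assoc flip: m_assoc[of s])
  ultimately show "t = \<one>"
    using assms by simp
qed (use assms in simp)

lemma free_partial_action_iff:
  "free_partial_action G D th \<longleftrightarrow>
     (\<forall>t\<in>carrier G. \<forall>y\<in>D (inv\<^bsub>G\<^esub> t). th t y = y \<longrightarrow> t = \<one>\<^bsub>G\<^esub>)"
  unfolding free_partial_action_def by blast

lemma free_global_action_iff:
  "free_global_action G TZ sg \<longleftrightarrow>
     (\<forall>t\<in>carrier G. \<forall>z\<in>topspace TZ. sg t z = z \<longrightarrow> t = \<one>\<^bsub>G\<^esub>)"
  unfolding free_global_action_def free_partial_action_iff by blast

lemma topological_partial_actionD:
  assumes "topological_partial_action G TG TY D th"
  shows "group G"
    and "\<And>t. t \<in> carrier G \<Longrightarrow> openin TY (D t)"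
    and "\<And>t. t \<in> carrier G \<Longrightarrow>
           homeomorphic_map (subtopology TY (D (inv\<^bsub>G\<^esub> t))) (subtopology TY (D t)) (th t)"
  using assms unfolding topological_partial_action_def topological_group_def
  by (simp_all only:)

lemma topological_partial_action_domain_subset:
  "topological_partial_action G TG TY D th \<Longrightarrow> t \<in> carrier G \<Longrightarrow> D t \<subseteq> topspace TY"
  by (rule openin_subset[OF topological_partial_actionD(2)])

lemma topological_partial_action_maps_domain:
  assumes act: "topological_partial_action G TG TY D th"
    and t: "t \<in> carrier G" and y: "y \<in> D (inv\<^bsub>G\<^esub> t)"
  shows "th t y \<in> D t"
proof -
  have "homeomorphic_map (subtopology TY (D (inv\<^bsub>G\<^esub> t))) (subtopology TY (D t)) (th t)"
    by (rule topological_partial_actionD(3)[OF act t])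
  then have "th t ` (topspace TY \<inter> D (inv\<^bsub>G\<^esub> t)) = topspace TY \<inter> D t"
    using homeomorphic_imp_surjective_map by fastforce
  moreover have "inv\<^bsub>G\<^esub> t \<in> carrier G"
    using group.inv_closed[OF topological_partial_actionD(1)[OF act] t] .
  ultimately show ?thesis
    using y topological_partial_action_domain_subset[OF act] by blast
qed

lemma topological_global_actionD:
  assumes "topological_global_action G TG TZ sg"
  shows "group G"
    and "\<And>s t z. s \<in> carrier G \<Longrightarrow> t \<in> carrier G \<Longrightarrow> z \<in> topspace TZ \<Longrightarrow>
           sg s (sg t z) = sg (s \<otimes>\<^bsub>G\<^esub> t) z"
    and "\<And>z. z \<in> topspace TZ \<Longrightarrow> sg \<one>\<^bsub>G\<^esub> z = z"
  using assms
  unfolding topological_global_action_def topological_partial_action_def topological_group_def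
  by (simp_all only: Int_absorb)

lemma topological_global_action_fixed_point_conj:
  fixes G :: "('a, 'm) monoid_scheme" (structure)
  assumes act: "topological_global_action G TG TZ sg"
    and s: "s \<in> carrier G" and t: "t \<in> carrier G" and z: "z \<in> topspace TZ"
    and fixed: "sg t (sg s z) = sg s z"
  shows "sg (inv s \<otimes> t \<otimes> s) z = z"
proof -
  interpret group G
    by (rule topological_global_actionD(1)[OF act])
  have "sg (inv s \<otimes> t \<otimes> s) z = sg (inv s) (sg t (sg s z))"
    using s t z by (simp add: topological_global_actionD(2)[OF act] m_assoc)
  also have "\<dots> = sg (inv s) (sg s z)"
    using fixed by simp
  also have "\<dots> = z"
    using s z by (simp add: topological_global_actionD(2)[OF act] topological_global_actionD(3)[OF act])
  finally show ?thesis .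
qed

lemma topological_global_action_fixed_point_inv:
  fixes G :: "('a, 'm) monoid_scheme" (structure)
  assumes act: "topological_global_action G TG TZ sg"
    and t: "t \<in> carrier G" and z: "z \<in> topspace TZ" and fixed: "sg t z = z"
  shows "sg (inv t) z = z"
proof -
  interpret group G
    by (rule topological_global_actionD(1)[OF act])
  have "sg (inv t) z = sg (inv t) (sg t z)"
    using fixed by simp
  also have "\<dots> = z"
    using t z by (simp add: topological_global_actionD(2)[OF act] topological_global_actionD(3)[OF act])
  finally show ?thesis .
qed

lemma enveloping_actionD:
  assumes "enveloping_action G TG TY D th TZ sg i"
  shows "topological_global_action G TG TZ sg"
    and "embedding_map TY TZ i"
    and "\<And>t. t \<in> carrier G \<Longrightarrow> i ` D t = i ` topspace TY \<inter> sg t ` (i ` topspace TY)"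
    and "\<And>t y. t \<in> carrier G \<Longrightarrow> y \<in> D (inv\<^bsub>G\<^esub> t) \<Longrightarrow> i (th t y) = sg t (i y)"
    and "topspace TZ = (\<Union>t\<in>carrier G. sg t ` (i ` topspace TY))"
  using assms unfolding enveloping_action_def by (simp_all only:)

lemma enveloping_action_inj_on:
  "enveloping_action G TG TY D th TZ sg i \<Longrightarrow> inj_on i (topspace TY)"
  using enveloping_actionD(2) embedding_map_def homeomorphic_imp_injective_map by blast

lemma enveloping_action_image_subset:
  "enveloping_action G TG TY D th TZ sg i \<Longrightarrow> i ` topspace TY \<subseteq> topspace TZ"
  using enveloping_actionD(2) embedding_map_def homeomorphic_imp_surjective_map by fastforce

lemma enveloping_action_domain_image_subset:
  assumes act: "topological_partial_action G TG TY D th"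
    and env: "enveloping_action G TG TY D th TZ sg i" and t: "t \<in> carrier G"
  shows "i ` D t \<subseteq> topspace TZ"
  using topological_partial_action_domain_subset[OF act t] enveloping_action_image_subset[OF env]
  by blast

lemma enveloping_action_fixed_point_in_domain:
  fixes G :: "('a, 'm) monoid_scheme" (structure)
  assumes act: "topological_partial_action G TG TY D th"
    and env: "enveloping_action G TG TY D th TZ sg i"
    and u: "u \<in> carrier G" and y: "y \<in> topspace TY" and fixed: "sg u (i y) = i y"
  shows "y \<in> D (inv u)" and "th u y = y"
proof -
  note gact = enveloping_actionD(1)[OF env]
    and inj = enveloping_action_inj_on[OF env]
    and iY = enveloping_action_image_subset[OF env]
  interpret group G
    by (rule topological_partial_actionD(1)[OF act])
  have "sg (inv u) (i y) = i y"
    using topological_global_action_fixed_point_inv[OF gact u _ fixed] iY y by blast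
  then have "i y \<in> i ` topspace TY \<inter> sg (inv u) ` (i ` topspace TY)"
    using y by (metis IntI image_eqI)
  also have "\<dots> = i ` D (inv u)"
    using enveloping_actionD(3)[OF env inv_closed[OF u]] by (rule sym)
  finally obtain y' where "y' \<in> D (inv u)" and "i y' = i y"
    by (metis imageE)
  moreover have "D (inv u) \<subseteq> topspace TY"
    using topological_partial_action_domain_subset[OF act] u by simp
  ultimately show yD: "y \<in> D (inv u)"
    using inj y by (metis inj_onD subsetD)
  have "i (th u y) = i y"
    using enveloping_actionD(4)[OF env u yD] fixed by simp
  moreover have "th u y \<in> topspace TY"
    using topological_partial_action_maps_domain[OF act u yD]
      topological_partial_action_domain_subset[OF act u] by blast
  ultimately show "th u y = y"
    using inj y by (meson inj_onD)
qed

theorem proposition3p3: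
  fixes G :: "('a, 'm) monoid_scheme" and TG :: "'a topology"
    and TY :: "'b topology" and D :: "'a \<Rightarrow> 'b set" and th :: "'a \<Rightarrow> 'b \<Rightarrow> 'b"
    and TZ :: "'c topology" and sg :: "'a \<Rightarrow> 'c \<Rightarrow> 'c" and i :: "'b \<Rightarrow> 'c"
  assumes "topological_partial_action G TG TY D th"
    and "enveloping_action G TG TY D th TZ sg i"
  shows "free_partial_action G D th \<longleftrightarrow> free_global_action G TZ sg"
proof
  assume free: "free_partial_action G D th"
  interpret group G
    by (rule topological_partial_actionD(1)[OF assms(1)])
  show "free_global_action G TZ sg"
    unfolding free_global_action_iff
  proof (intro ballI impI)
    fix t z assume t: "t \<in> carrier G" and z: "z \<in> topspace TZ" and fixed: "sg t z = z"
    obtain s y where s: "s \<in> carrier G" and y: "y \<in> topspace TY" and "z = sg s (i y)"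
      using z unfolding enveloping_actionD(5)[OF assms(2)] by blast
    then have "sg (inv\<^bsub>G\<^esub> s \<otimes>\<^bsub>G\<^esub> t \<otimes>\<^bsub>G\<^esub> s) (i y) = i y"
      using enveloping_action_image_subset[OF assms(2)] fixed
      by (intro topological_global_action_fixed_point_conj[OF enveloping_actionD(1)[OF assms(2)] s t])
        auto
    moreover have conj: "inv\<^bsub>G\<^esub> s \<otimes>\<^bsub>G\<^esub> t \<otimes>\<^bsub>G\<^esub> s \<in> carrier G"
      using s t by simp
    ultimately have "inv\<^bsub>G\<^esub> s \<otimes>\<^bsub>G\<^esub> t \<otimes>\<^bsub>G\<^esub> s = \<one>\<^bsub>G\<^esub>"
      using free enveloping_action_fixed_point_in_domain[OF assms conj y]
      unfolding free_partial_action_iff by blast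
    then show "t = \<one>\<^bsub>G\<^esub>"
      using inv_conj_eq_one_iff[OF s t] by simp
  qed
next
  assume free: "free_global_action G TZ sg"
  show "free_partial_action G D th"
    unfolding free_partial_action_iff
  proof (intro ballI impI)
    fix t y assume t: "t \<in> carrier G" and y: "y \<in> D (inv\<^bsub>G\<^esub> t)" and fixed: "th t y = y"
    have "sg t (i y) = i y"
      using enveloping_actionD(4)[OF assms(2) t y] fixed by simp
    moreover have "i y \<in> topspace TZ"
      using enveloping_action_domain_image_subset[OF assms
          group.inv_closed[OF topological_partial_actionD(1)[OF assms(1)] t]] y
      by blast
    ultimately show "t = \<one>\<^bsub>G\<^esub>"
      using free t unfolding free_global_action_iff by blast
  qed
qed

end
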